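(* Let $V:[0,1]\to\mathbb R$ be continuous and let $\{\pi_\kappa\}_{\kappa>0}$ be probability measures on $[0,1]$, absolutely continuous with respect to Lebesgue measure, satisfying a Large Deviation Principle with speed $2\kappa^{-1}$ and rate function $V$ as $\kappa\to0$: $$-\inf_{x\in\mathring E}V(x)\le\liminf_{\kappa\to0}\frac\kappa2\log\pi_\kappa(E)\le\limsup_{\kappa\to0}\frac\kappa2\log\pi_\kappa(E)\le-\inf_{x\in\overline E}V(x)$$ for all Borel $E\subset[0,1]$. For $q\in\mathcal P([0,1])$ define $$\mathcal F_\kappa(q):=\begin{cases}\frac\kappa2\int_0^1\frac{dq}{d\pi_\kappa}\log\Big(\frac{dq}{d\pi_\kappa}\Big)d\pi_\kappa&\text{if }q\ll\pi_\kappa,\\+\infty&\text{otherwise,}\end{cases}\qquad \mathcal V(q):=\int_0^1\{V(x)-\min V\}\,dq(x).$$ Then $\mathcal F_\kappa$ $\Gamma$-converges to $\mathcal V$ as $\kappa\to0$ with respect to weak-$*$ convergence of probability measures: for every $q_\kappa\overset{*}{\rightharpoonup}q$, $\mathcal V(q)\le\liminf_{\kappa\to0}\mathcal F_\kappa(q_\kappa)$, and for every $q$ there exist $q_\kappa\overset{*}{\rightharpoonup}q$ with $\limsup_{\kappa\to0}\mathcal F_\kappa(q_\kappa)\le\mathcal V(q)$.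
   Context: $\mathring E$ and $\overline E$ denote interior and closure of $E$ in $[0,1]$. Weak-$*$ convergence $q_\kappa\overset{*}{\rightharpoonup}q$ of probability measures on $[0,1]$ means $\int\varphi\,dq_\kappa\to\int\varphi\,dq$ for all bounded continuous $\varphi$. (In the paper $\pi_\kappa$ is the reference measure $w_\kappa z_\kappa\,dx$ built from the principal eigenfunctions of the Kimura operators, but the statement only uses the large deviation hypothesis.) *)

theory Defs
  imports "HOL-Probability.Probability"
begin

definition prob01 :: "real measure \<Rightarrow> bool" where
  "prob01 M \<longleftrightarrow> prob_space M \<and> sets M = sets (restrict_space borel {0..1::real})"

definition scaled_log :: "real \<Rightarrow> real \<Rightarrow> ereal" where
  "scaled_log k p = (if p = 0 then -\<infinity> else ereal (k / 2 * ln p))"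

text \<open>Weak-* convergence q_kappa -> q as kappa -> 0+, tested against continuous functions
  on [0,1] (which are exactly the bounded continuous functions on [0,1]).\<close>
definition weak_star_conv :: "(real \<Rightarrow> real measure) \<Rightarrow> real measure \<Rightarrow> bool" where
  "weak_star_conv qs q \<longleftrightarrow>
     (\<forall>\<phi>::real \<Rightarrow> real. continuous_on {0..1} \<phi> \<longrightarrow>
        ((\<lambda>\<kappa>. integral\<^sup>L (qs \<kappa>) \<phi>) \<longlongrightarrow> integral\<^sup>L q \<phi>) (at_right 0))"

text \<open>Scaled relative entropy F_kappa(q). Since f log f \<ge> -1/e, the integral is well defined
  in (-infinity, +infinity]; it is +infinity exactly when f log f is not integrable.\<close>
definition free_energy :: "real \<Rightarrow> real measure \<Rightarrow> real measure \<Rightarrow> ereal" where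
  "free_energy \<kappa> \<pi> q =
     (if absolutely_continuous \<pi> q then
        (let f = (\<lambda>x. enn2real (RN_deriv \<pi> q x)) in
          if integrable \<pi> (\<lambda>x. f x * ln (f x))
          then ereal (\<kappa> / 2 * (\<integral>x. f x * ln (f x) \<partial>\<pi>))
          else \<infinity>)
      else \<infinity>)"

definition pot_energy :: "(real \<Rightarrow> real) \<Rightarrow> real measure \<Rightarrow> real" where
  "pot_energy V q = (\<integral>x. (V x - (INF y\<in>{0..1}. V y)) \<partial>q)"

end

theory Submission
  imports Defs
begin

text \<open>
  For a density \<open>f = dq/d\<pi>\<close> and a bounded \<open>\<phi>\<close>, the Fenchel-Young inequality
  \<open>f \<phi> \<le> f log f - f + e\<^sup>\<phi>\<close> integrates to \<open>\<integral>\<phi> dq + 1 - \<integral>e\<^sup>\<phi> d\<pi> \<le> \<integral>f log f d\<pi>\<close>.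
  Take \<open>\<phi> = (2/\<kappa>)(V - \<delta>)\<close>: covering \<open>[0,1]\<close> by small cells on which \<open>V\<close> is almost constant,
  the LDP upper bound keeps \<open>\<integral>e\<^sup>\<phi> d\<pi>\<^sub>\<kappa>\<close> bounded as \<open>\<kappa> \<rightarrow> 0\<close>, so
  \<open>F\<^sub>\<kappa>(q\<^sub>\<kappa>) \<ge> \<integral>V dq\<^sub>\<kappa> - \<delta> - O(\<kappa>)\<close>, and \<open>\<integral>V dq\<^sub>\<kappa> \<rightarrow> \<integral>V dq\<close> by weak-* convergence.

  On the grid of mesh \<open>1/n\<close>, reweight \<open>\<pi>\<^sub>\<kappa>\<close> by the constant \<open>q(I\<^sub>i)/\<pi>\<^sub>\<kappa>(I\<^sub>i)\<close> on each
  cell \<open>I\<^sub>i\<close>. Its free energy is \<open>(\<kappa>/2) \<Sum> q(I\<^sub>i) log (q(I\<^sub>i)/\<pi>\<^sub>\<kappa>(I\<^sub>i)) \<le> \<Sum> q(I\<^sub>i) (-(\<kappa>/2) log \<pi>\<^sub>\<kappa>(I\<^sub>i))\<close>,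
  which the LDP lower bound makes at most \<open>\<integral>V dq + 1/n\<close> for small \<open>\<kappa>\<close>. Letting \<open>n \<rightarrow> \<infinity>\<close> slowly
  as \<open>\<kappa> \<rightarrow> 0\<close> gives the recovery sequence; it converges weak-* to \<open>q\<close> because it agrees with \<open>q\<close>
  on the step functions of its grid.

  Finally, the LDP applied to \<open>E = [0,1]\<close> forces \<open>min V = 0\<close>.
\<close>

lemma prob01_prob_space: "prob01 M \<Longrightarrow> prob_space M"
  unfolding prob01_def by simp

lemma prob01_space: "prob01 M \<Longrightarrow> space M = {0..1}"
  unfolding prob01_def by (metis sets_eq_imp_space_eq space_restrict_space space_borel inf_top_right)

lemma prob01_sets_eq: "prob01 M \<Longrightarrow> prob01 N \<Longrightarrow> sets N = sets M"
  unfolding prob01_def by simp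

lemma prob01_sets: "prob01 M \<Longrightarrow> A \<in> sets borel \<Longrightarrow> A \<subseteq> {0..1} \<Longrightarrow> A \<in> sets M"
  unfolding prob01_def by (simp add: sets_restrict_space_iff)

lemma prob01_measurable:
  "prob01 M \<Longrightarrow> f \<in> borel_measurable (restrict_space borel {0..1}) \<Longrightarrow> f \<in> borel_measurable M"
  unfolding prob01_def using measurable_cong_sets by blast

lemma prob01_measurable_continuous:
  "prob01 M \<Longrightarrow> continuous_on {0..1} f \<Longrightarrow> f \<in> borel_measurable M"
  using prob01_measurable borel_measurable_continuous_on_restrict by blast

lemma prob01_integrable_continuous:
  fixes f :: "real \<Rightarrow> real"
  assumes M: "prob01 M" and f: "continuous_on {0..1} f"
  shows "integrable M f"
proof -
  interpret prob_space M using M by (rule prob01_prob_space)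
  obtain B where "\<And>x. x \<in> {0..1} \<Longrightarrow> norm (f x) \<le> B"
    using compact_imp_bounded[OF compact_continuous_image[OF f compact_Icc]]
    unfolding bounded_iff by fastforce
  then show ?thesis
    using prob01_measurable_continuous[OF M f]
    by (intro integrable_const_bound[where B = B]) (auto simp: prob01_space[OF M])
qed

lemma (in prob_space) abs_integral_diff_le:
  fixes f g :: "'a \<Rightarrow> real"
  assumes f: "integrable M f" and g: "integrable M g"
    and le: "\<And>x. x \<in> space M \<Longrightarrow> \<bar>f x - g x\<bar> \<le> a"
  shows "\<bar>(\<integral>x. f x \<partial>M) - (\<integral>x. g x \<partial>M)\<bar> \<le> a"
proof -
  have "(\<integral>x. f x - g x \<partial>M) \<le> (\<integral>x. a \<partial>M)" "(\<integral>x. g x - f x \<partial>M) \<le> (\<integral>x. a \<partial>M)"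
    using f g le by (intro integral_mono; force simp: abs_le_iff)+
  then show ?thesis
    using f g by (simp add: abs_le_iff prob_space)
qed

section \<open>Uniform continuity and diagonal sequences\<close>

lemma uniformly_continuous_on_eventually_mesh:
  assumes "uniformly_continuous_on S f" "e > 0"
  shows "\<forall>\<^sub>F n in sequentially. \<forall>x\<in>S. \<forall>y\<in>S. dist x y \<le> 1 / real n \<longrightarrow> dist (f x) (f y) < e"
proof -
  obtain d where "d > 0" and d: "\<And>x y. x \<in> S \<Longrightarrow> y \<in> S \<Longrightarrow> dist x y < d \<Longrightarrow> dist (f x) (f y) < e"
    using assms unfolding uniformly_continuous_on_def by metis
  have "\<forall>\<^sub>F n in sequentially. 1 / real n < d"
    using \<open>d > 0\<close> by (rule order_tendstoD[OF lim_const_over_n])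
  then show ?thesis
    by eventually_elim (use d in force)
qed

lemma Greatest_less_seq:
  fixes e :: "nat \<Rightarrow> real"
  assumes e: "\<And>k. e k \<le> 1 / real (Suc k)" and "0 < t" "t < e m"
  shows "t < e (GREATEST k. t < e k)" "m \<le> (GREATEST k. t < e k)"
proof -
  have bound: "k \<le> nat \<lceil>1 / t\<rceil>" if "t < e k" for k
  proof -
    have "t < 1 / real (Suc k)"
      using that e[of k] by linarith
    then have "real (Suc k) < 1 / t"
      using \<open>0 < t\<close> by (simp add: field_simps)
    then show ?thesis
      by linarith
  qed
  show "t < e (GREATEST k. t < e k)"
    by (rule GreatestI_nat[where P = "\<lambda>k. t < e k", OF \<open>t < e m\<close> bound])
  show "m \<le> (GREATEST k. t < e k)"
    by (rule Greatest_le_nat[where P = "\<lambda>k. t < e k", OF \<open>t < e m\<close> bound])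
qed

lemma eventually_at_right_diagonal:
  fixes P :: "nat \<Rightarrow> real \<Rightarrow> bool"
  assumes "\<And>n. \<forall>\<^sub>F x in at_right a. P n x"
  obtains N :: "real \<Rightarrow> nat" where "filterlim N at_top (at_right a)" "\<forall>\<^sub>F x in at_right a. P (N x) x"
proof -
  obtain b where b: "\<And>n. a < b n" "\<And>n x. a < x \<Longrightarrow> x < b n \<Longrightarrow> P n x"
    using assms unfolding eventually_at_right_field by metis
  define e where "e n = min (1 / real (Suc n)) (b n - a)" for n
  have e_le: "e k \<le> 1 / real (Suc k)" for k
    by (simp add: e_def)
  have close: "\<forall>\<^sub>F x in at_right a. x - a < e m" for m
    using b(1) by (intro eventually_at_rightI[of a "a + e m"]) (auto simp: e_def)
  define N where "N x = (GREATEST m. x - a < e m)" for x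
  show ?thesis
  proof
    show "filterlim N at_top (at_right a)"
      unfolding filterlim_at_top
    proof
      fix m
      show "\<forall>\<^sub>F x in at_right a. m \<le> N x"
        using close[of m] eventually_at_right_less[of a]
        by eventually_elim (simp add: N_def Greatest_less_seq(2)[OF e_le])
    qed
    show "\<forall>\<^sub>F x in at_right a. P (N x) x"
      using close[of 0] eventually_at_right_less[of a]
    proof eventually_elim
      case (elim x)
      then have "x - a < e (N x)"
        unfolding N_def by (intro Greatest_less_seq(1)[OF e_le]) auto
      then show "P (N x) x"
        using b(2) elim by (simp add: e_def)
    qed
  qed
qed

section \<open>The grid of mesh \<open>1/n\<close> on the unit interval\<close>

text \<open>Cell \<open>i\<close> is \<open>[i/n, (i+1)/n)\<close>, except that the last cell also contains \<open>1\<close>.\<close>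

definition grid_index :: "nat \<Rightarrow> real \<Rightarrow> nat" where
  "grid_index n x = min (n - 1) (nat \<lfloor>x * n\<rfloor>)"

definition grid_cell :: "nat \<Rightarrow> nat \<Rightarrow> real set" where
  "grid_cell n i = {x \<in> {0..1}. grid_index n x = i}"

lemma grid_index_less: "0 < n \<Longrightarrow> grid_index n x < n"
  unfolding grid_index_def by simp

lemma grid_cell_subset: "grid_cell n i \<subseteq> {0..1}"
  unfolding grid_cell_def by auto

lemma grid_cell_grid_index: "x \<in> {0..1} \<Longrightarrow> x \<in> grid_cell n (grid_index n x)"
  unfolding grid_cell_def by simp

lemma grid_interval_nonempty: "0 < n \<Longrightarrow> real i / real n < (real i + 1) / real n"
  by (simp add: divide_strict_right_mono)

lemma grid_interval_subset: "i < n \<Longrightarrow> {real i / n .. (real i + 1) / n} \<subseteq> {0..1}"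
  by (auto simp: field_simps)

lemma abs_diff_grid_point_le: "x \<in> {real i / n .. (real i + 1) / n} \<Longrightarrow> \<bar>x - real i / n\<bar> \<le> 1 / n"
  by (simp add: add_divide_distrib)

lemma grid_cell_subset_interval:
  assumes n: "0 < n"
  shows "grid_cell n i \<subseteq> {real i / n .. (real i + 1) / n}"
proof
  fix x assume "x \<in> grid_cell n i"
  then have x: "0 \<le> x" "x \<le> 1" and i: "i = min (n - 1) (nat \<lfloor>x * n\<rfloor>)"
    unfolding grid_cell_def grid_index_def by auto
  have fl: "real_of_int \<lfloor>x * n\<rfloor> \<le> x * n" "x * n < real_of_int \<lfloor>x * n\<rfloor> + 1"
    by linarith+
  have "x * n \<le> n"
    using x by (simp add: mult_left_le_one_le)
  have "real i \<le> x * n \<and> x * n \<le> real i + 1"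
  proof (cases "nat \<lfloor>x * n\<rfloor> \<le> n - 1")
    case True
    then have "real i = real_of_int \<lfloor>x * n\<rfloor>"
      using x unfolding i by simp
    then show ?thesis
      using fl by simp
  next
    case False
    then have "int n \<le> \<lfloor>x * n\<rfloor>"
      by linarith
    then have "real n \<le> x * n"
      by (simp add: le_floor_iff)
    moreover have "real i = real n - 1"
      using n False unfolding i by (simp add: of_nat_diff)
    ultimately show ?thesis
      using \<open>x * n \<le> n\<close> by simp
  qed
  then show "x \<in> {real i / n .. (real i + 1) / n}"
    using n by (simp add: field_simps)
qed

lemma grid_point_close:
  assumes "0 < n" "x \<in> {0..1}"
  shows "real (grid_index n x) / n \<in> {0..1}" "\<bar>x - real (grid_index n x) / n\<bar> \<le> 1 / n"
proof -
  show "real (grid_index n x) / n \<in> {0..1}"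
    using grid_index_less[OF assms(1), of x] by simp
  show "\<bar>x - real (grid_index n x) / n\<bar> \<le> 1 / n"
    using grid_cell_subset_interval[OF assms(1)] grid_cell_grid_index[OF assms(2)]
    by (intro abs_diff_grid_point_le) blast
qed

lemma grid_interval_subset_cell:
  assumes "i < n"
  shows "{real i / n <..< (real i + 1) / n} \<subseteq> grid_cell n i"
proof
  fix x assume x: "x \<in> {real i / n <..< (real i + 1) / n}"
  then have "x \<in> {real i / n .. (real i + 1) / n}"
    by simp
  then have "x \<in> {0..1}"
    using grid_interval_subset[OF assms] by blast
  have "real i < x * n" "x * n < real i + 1"
    using x assms by (auto simp: field_simps)
  then have "\<lfloor>x * n\<rfloor> = int i"
    by (simp add: floor_eq_iff)
  then show "x \<in> grid_cell n i"
    using \<open>x \<in> {0..1}\<close> assms unfolding grid_cell_def grid_index_def by auto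
qed

lemma measurable_grid_index [measurable]: "grid_index n \<in> borel \<rightarrow>\<^sub>M count_space UNIV"
  unfolding grid_index_def by measurable

lemma grid_cell_borel: "grid_cell n i \<in> sets borel"
proof -
  have "grid_cell n i = {0..1} \<inter> (grid_index n -` {i} \<inter> space borel)"
    unfolding grid_cell_def by auto
  then show ?thesis
    using measurable_sets[OF measurable_grid_index] by simp
qed

lemma grid_cell_closure_of:
  assumes "0 < n"
  shows "top_of_set {0..1} closure_of grid_cell n i \<subseteq> {0..1} \<inter> {real i / n .. (real i + 1) / n}"
proof -
  have "grid_cell n i \<subseteq> {0..1} \<inter> {real i / n .. (real i + 1) / n}"
    by (intro Int_greatest grid_cell_subset grid_cell_subset_interval[OF assms])
  then show ?thesis
    by (intro closure_of_minimal closedin_closed_Int) auto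
qed

lemma grid_cell_interior_of:
  assumes "i < n"
  shows "{real i / n <..< (real i + 1) / n} \<subseteq> top_of_set {0..1} interior_of grid_cell n i"
proof -
  have "{real i / n <..< (real i + 1) / n} \<subseteq> {0..1}"
    using grid_interval_subset_cell[OF assms] grid_cell_subset by (rule order_trans)
  then show ?thesis
    using grid_interval_subset_cell[OF assms] by (intro interior_of_maximal open_subset) auto
qed

lemma bdd_below_image_continuous_on_Icc:
  fixes f :: "real \<Rightarrow> real"
  assumes "continuous_on {0..1} f" "S \<subseteq> {0..1}"
  shows "bdd_below (f ` S)"
  using assms compact_imp_bounded[OF compact_continuous_image[OF assms(1) compact_Icc]]
  by (meson bdd_below_mono bounded_imp_bdd_below image_mono)

lemma grid_cell_INF_le:
  fixes f :: "real \<Rightarrow> real"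
  assumes f: "continuous_on {0..1} f" and i: "i < n" and x: "x \<in> grid_cell n i"
  shows "(INF y\<in>{real i / n <..< (real i + 1) / n}. f y) \<le> f x"
proof -
  let ?I = "{real i / n <..< (real i + 1) / n}"
  have n: "0 < n"
    using i by simp
  have closure: "closure ?I = {real i / n .. (real i + 1) / n}"
    using grid_interval_nonempty[OF n] by simp
  have "?I \<subseteq> {0..1}"
    using grid_interval_subset_cell[OF i] grid_cell_subset by (rule order_trans)
  then have bdd: "bdd_below (f ` ?I)"
    by (rule bdd_below_image_continuous_on_Icc[OF f])
  have "continuous_on (closure ?I) f"
    using f grid_interval_subset[OF i] unfolding closure by (rule continuous_on_subset)
  moreover have "x \<in> closure ?I"
    using x grid_cell_subset_interval[OF n] unfolding closure by blast
  ultimately show ?thesis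
    by (rule continuous_ge_on_closure) (rule cINF_lower[OF bdd])
qed

lemma grid_cell_INF_approx:
  fixes f :: "real \<Rightarrow> real"
  assumes f: "continuous_on {0..1} f" and i: "i < n" and "0 < e"
  obtains y where "y \<in> {real i / n <..< (real i + 1) / n}" "f y < (INF y\<in>{real i / n <..< (real i + 1) / n}. f y) + e"
proof -
  let ?I = "{real i / n <..< (real i + 1) / n}"
  have "?I \<noteq> {}"
    using grid_interval_nonempty[of n i] i by simp
  moreover have "?I \<subseteq> {0..1}"
    using grid_interval_subset_cell[OF i] grid_cell_subset by (rule order_trans)
  then have "bdd_below (f ` ?I)"
    by (rule bdd_below_image_continuous_on_Icc[OF f])
  ultimately have "(INF y\<in>?I. f y) < (INF y\<in>?I. f y) + e \<longleftrightarrow> (\<exists>y\<in>?I. f y < (INF y\<in>?I. f y) + e)"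
    by (rule cINF_less_iff)
  then show ?thesis
    using that \<open>0 < e\<close> by auto
qed

lemma prob01_measurable_grid_step:
  fixes h :: "nat \<Rightarrow> real"
  assumes "prob01 M"
  shows "(\<lambda>x. h (grid_index n x)) \<in> borel_measurable M"
proof -
  have "(\<lambda>x. h (grid_index n x)) \<in> borel_measurable borel"
    by measurable
  then show ?thesis
    by (rule prob01_measurable[OF assms measurable_restrict_space1])
qed

lemma has_bochner_integral_grid_step:
  fixes h :: "nat \<Rightarrow> real"
  assumes M: "prob01 M" and n: "0 < n"
  shows "has_bochner_integral M (\<lambda>x. h (grid_index n x)) (\<Sum>i<n. h i * measure M (grid_cell n i))"
proof -
  interpret prob_space M using M by (rule prob01_prob_space)
  have step: "h (grid_index n x) = (\<Sum>i<n. h i * indicator (grid_cell n i) x)" if "x \<in> space M" for x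
  proof -
    have "(\<Sum>i<n. h i * indicator (grid_cell n i) x) = (\<Sum>i<n. if i = grid_index n x then h i else 0)"
      using that prob01_space[OF M] by (intro sum.cong) (auto simp: grid_cell_def)
    then show ?thesis
      using grid_index_less[OF n] by simp
  qed
  have "has_bochner_integral M (\<lambda>x. \<Sum>i<n. h i * indicator (grid_cell n i) x)
      (\<Sum>i<n. h i * measure M (grid_cell n i))"
    using prob01_sets[OF M grid_cell_borel grid_cell_subset]
    by (intro has_bochner_integral_sum has_bochner_integral_mult_right has_bochner_integral_real_indicator)
      (auto simp: less_top[symmetric])
  then show ?thesis
    by (simp only: has_bochner_integral_cong[OF refl step refl])
qed

lemma sum_measure_grid_cell:
  assumes "prob01 M" "0 < n"
  shows "(\<Sum>i<n. measure M (grid_cell n i)) = 1"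
proof -
  interpret prob_space M using assms(1) by (rule prob01_prob_space)
  have "has_bochner_integral M (\<lambda>_. 1) (\<Sum>i<n. measure M (grid_cell n i))"
    using has_bochner_integral_grid_step[OF assms, of "\<lambda>_. 1"] by simp
  then show ?thesis
    using has_bochner_integral_integral_eq prob_space by fastforce
qed

lemma sum_grid_step_le_integral:
  fixes h :: "nat \<Rightarrow> real"
  assumes M: "prob01 M" and n: "0 < n" and f: "integrable M f"
    and le: "\<And>i x. i < n \<Longrightarrow> x \<in> grid_cell n i \<Longrightarrow> h i \<le> f x"
  shows "(\<Sum>i<n. h i * measure M (grid_cell n i)) \<le> (\<integral>x. f x \<partial>M)"
proof -
  note step = has_bochner_integral_grid_step[OF M n, of h]
  have "(\<integral>x. h (grid_index n x) \<partial>M) \<le> (\<integral>x. f x \<partial>M)"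
  proof (rule integral_mono[OF integrable.intros[OF step] f])
    fix x assume "x \<in> space M"
    then have "x \<in> grid_cell n (grid_index n x)"
      using prob01_space[OF M] by (simp add: grid_cell_grid_index)
    then show "h (grid_index n x) \<le> f x"
      using le grid_index_less[OF n] by blast
  qed
  then show ?thesis
    using has_bochner_integral_integral_eq[OF step] by simp
qed

lemma weak_star_conv_grid_agree:
  assumes N: "filterlim N at_top (at_right 0)" and q: "prob01 q"
    and agree: "\<forall>\<^sub>F \<kappa> in at_right 0. prob01 (qs \<kappa>) \<and>
      (\<forall>h :: nat \<Rightarrow> real. (\<integral>x. h (grid_index (N \<kappa>) x) \<partial>qs \<kappa>) = (\<integral>x. h (grid_index (N \<kappa>) x) \<partial>q))"
  shows "weak_star_conv qs q"
  unfolding weak_star_conv_def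
proof (intro allI impI tendstoI)
  fix \<phi> :: "real \<Rightarrow> real" and \<epsilon> :: real
  assume \<phi>: "continuous_on {0..1} \<phi>" and "0 < \<epsilon>"
  have "\<forall>\<^sub>F m in sequentially. 0 < m \<and>
      (\<forall>x\<in>{0..1}. \<forall>y\<in>{0..1}. dist x y \<le> 1 / real m \<longrightarrow> dist (\<phi> x) (\<phi> y) < \<epsilon> / 3)"
    using \<open>0 < \<epsilon>\<close> compact_uniformly_continuous[OF \<phi> compact_Icc]
    by (intro eventually_conj eventually_gt_at_top uniformly_continuous_on_eventually_mesh) auto
  then have "\<forall>\<^sub>F \<kappa> in at_right 0. 0 < N \<kappa> \<and>
      (\<forall>x\<in>{0..1}. \<forall>y\<in>{0..1}. \<bar>x - y\<bar> \<le> 1 / real (N \<kappa>) \<longrightarrow> \<bar>\<phi> x - \<phi> y\<bar> < \<epsilon> / 3)"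
    using N unfolding filterlim_iff dist_real_def by blast
  with agree show "\<forall>\<^sub>F \<kappa> in at_right 0. dist (\<integral>x. \<phi> x \<partial>qs \<kappa>) (\<integral>x. \<phi> x \<partial>q) < \<epsilon>"
  proof eventually_elim
    case (elim \<kappa>)
    define m where "m = N \<kappa>"
    have m: "0 < m" and Q: "prob01 (qs \<kappa>)"
      using elim by (auto simp: m_def)
    define \<psi> where "\<psi> x = \<phi> (real (grid_index m x) / m)" for x
    have close: "\<bar>\<phi> x - \<psi> x\<bar> \<le> \<epsilon> / 3" if "x \<in> {0..1}" for x
      using elim that grid_point_close[OF m that] unfolding \<psi>_def m_def by (meson less_imp_le)
    have approx: "\<bar>(\<integral>x. \<phi> x \<partial>M) - (\<integral>x. \<psi> x \<partial>M)\<bar> \<le> \<epsilon> / 3" if M: "prob01 M" for M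
    proof (rule prob_space.abs_integral_diff_le[OF prob01_prob_space[OF M]])
      show "integrable M \<psi>"
        unfolding \<psi>_def using has_bochner_integral_grid_step[OF M m] by (rule integrable.intros)
    qed (use close prob01_space[OF M] prob01_integrable_continuous[OF M \<phi>] in auto)
    have "\<forall>h :: nat \<Rightarrow> real. (\<integral>x. h (grid_index m x) \<partial>qs \<kappa>) = (\<integral>x. h (grid_index m x) \<partial>q)"
      using elim(1) unfolding m_def by (rule conjunct2)
    then have "(\<integral>x. \<psi> x \<partial>qs \<kappa>) = (\<integral>x. \<psi> x \<partial>q)"
      unfolding \<psi>_def by (rule spec)
    then show ?case
      using approx[OF Q] approx[OF q] \<open>0 < \<epsilon>\<close> unfolding dist_real_def by linarith
  qed
qed

section \<open>Free energy\<close>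

lemma fenchel_young_ln_exp:
  fixes a b :: real
  assumes "0 \<le> a"
  shows "a * b \<le> a * ln a - a + exp b"
proof (cases "a = 0")
  case False
  then have "a > 0"
    using assms by simp
  have "a * (1 + (b - ln a)) \<le> a * exp (b - ln a)"
    using \<open>a > 0\<close> by (intro mult_left_mono exp_ge_add_one_self) auto
  also have "a * exp (b - ln a) = exp b"
    using \<open>a > 0\<close> by (simp add: exp_diff)
  finally show ?thesis
    by (simp add: algebra_simps)
qed simp

lemma free_energy_ge_variational:
  fixes \<phi> :: "real \<Rightarrow> real"
  assumes P: "prob_space P" and Q: "prob_space Q" and sets_eq: "sets Q = sets P" and "0 < \<kappa>"
    and \<phi>_Q: "integrable Q \<phi>" and exp_\<phi>_P: "integrable P (\<lambda>x. exp (\<phi> x))"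
  shows "ereal (\<kappa> / 2 * ((\<integral>x. \<phi> x \<partial>Q) + 1 - (\<integral>x. exp (\<phi> x) \<partial>P))) \<le> free_energy \<kappa> P Q"
proof -
  interpret P: prob_space P by (rule P)
  interpret Q: prob_space Q by (rule Q)
  define f where "f x = enn2real (RN_deriv P Q x)" for x
  show ?thesis
  proof (cases "absolutely_continuous P Q \<and> integrable P (\<lambda>x. f x * ln (f x))")
    case False
    then have "free_energy \<kappa> P Q = \<infinity>"
      unfolding free_energy_def f_def by (auto simp: Let_def)
    then show ?thesis
      by simp
  next
    case True
    then have ac: "absolutely_continuous P Q" and ent: "integrable P (\<lambda>x. f x * ln (f x))"
      by auto
    have \<phi>_meas: "\<phi> \<in> borel_measurable P"
      using borel_measurable_integrable[OF \<phi>_Q] measurable_cong_sets[OF sets_eq refl] by blast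
    note RN = P.RN_deriv_integrable[OF prob_space_imp_sigma_finite[OF Q] ac sets_eq]
      P.RN_deriv_integral[OF prob_space_imp_sigma_finite[OF Q] ac sets_eq]
    have f\<phi>: "integrable P (\<lambda>x. f x * \<phi> x)" "(\<integral>x. \<phi> x \<partial>Q) = (\<integral>x. f x * \<phi> x \<partial>P)"
      using RN[OF \<phi>_meas] \<phi>_Q unfolding f_def by auto
    have f1: "integrable P (\<lambda>x. f x)" "(\<integral>x. f x \<partial>P) = 1"
      using RN[of "\<lambda>_. 1"] Q.prob_space unfolding f_def by auto
    have young: "f x * \<phi> x + f x - exp (\<phi> x) \<le> f x * ln (f x)" for x
      using fenchel_young_ln_exp[of "f x" "\<phi> x"] by (simp add: f_def)
    have "(\<integral>x. \<phi> x \<partial>Q) + 1 - (\<integral>x. exp (\<phi> x) \<partial>P) = (\<integral>x. f x * \<phi> x + f x - exp (\<phi> x) \<partial>P)"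
      using f\<phi> f1 exp_\<phi>_P by simp
    also have "\<dots> \<le> (\<integral>x. f x * ln (f x) \<partial>P)"
      using f\<phi> f1 exp_\<phi>_P ent young by (intro integral_mono) auto
    finally have "\<kappa> / 2 * ((\<integral>x. \<phi> x \<partial>Q) + 1 - (\<integral>x. exp (\<phi> x) \<partial>P)) \<le> \<kappa> / 2 * (\<integral>x. f x * ln (f x) \<partial>P)"
      using \<open>0 < \<kappa>\<close> by simp
    then show ?thesis
      using ac ent unfolding free_energy_def f_def by simp
  qed
qed

lemma free_energy_ge_exp_moment:
  fixes V :: "real \<Rightarrow> real"
  assumes P: "prob01 P" and Q: "prob01 Q" and V: "continuous_on {0..1} V" and "0 < \<kappa>"
    and moment: "(\<integral>x. exp (2 / \<kappa> * (V x - \<delta>)) \<partial>P) \<le> C"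
  shows "ereal ((\<integral>x. V x \<partial>Q) - \<delta> - \<kappa> / 2 * C) \<le> free_energy \<kappa> P Q"
proof -
  interpret Q: prob_space Q
    using Q by (rule prob01_prob_space)
  define \<phi> where "\<phi> x = 2 / \<kappa> * (V x - \<delta>)" for x
  have \<phi>_cont: "continuous_on {0..1} \<phi>" "continuous_on {0..1} (\<lambda>x. exp (\<phi> x))"
    unfolding \<phi>_def by (intro continuous_intros V)+
  have "\<kappa> / 2 * (\<integral>x. \<phi> x \<partial>Q) = (\<integral>x. V x \<partial>Q) - \<delta>"
    unfolding \<phi>_def using prob01_integrable_continuous[OF Q V] \<open>0 < \<kappa>\<close> by (simp add: Q.prob_space)
  moreover have "\<kappa> / 2 * (\<integral>x. exp (\<phi> x) \<partial>P) \<le> \<kappa> / 2 * C"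
    using moment \<open>0 < \<kappa>\<close> unfolding \<phi>_def by (intro mult_left_mono) auto
  moreover have "\<kappa> / 2 * ((\<integral>x. \<phi> x \<partial>Q) + 1 - (\<integral>x. exp (\<phi> x) \<partial>P))
      = \<kappa> / 2 * (\<integral>x. \<phi> x \<partial>Q) + \<kappa> / 2 - \<kappa> / 2 * (\<integral>x. exp (\<phi> x) \<partial>P)"
    by (simp add: algebra_simps)
  ultimately have "(\<integral>x. V x \<partial>Q) - \<delta> - \<kappa> / 2 * C \<le> \<kappa> / 2 * ((\<integral>x. \<phi> x \<partial>Q) + 1 - (\<integral>x. exp (\<phi> x) \<partial>P))"
    using \<open>0 < \<kappa>\<close> by linarith
  then have "ereal ((\<integral>x. V x \<partial>Q) - \<delta> - \<kappa> / 2 * C)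
      \<le> ereal (\<kappa> / 2 * ((\<integral>x. \<phi> x \<partial>Q) + 1 - (\<integral>x. exp (\<phi> x) \<partial>P)))"
    by simp
  also have "\<dots> \<le> free_energy \<kappa> P Q"
    using free_energy_ge_variational[OF prob01_prob_space[OF P] prob01_prob_space[OF Q]
        prob01_sets_eq[OF P Q] \<open>0 < \<kappa>\<close> prob01_integrable_continuous[OF Q \<phi>_cont(1)]
        prob01_integrable_continuous[OF P \<phi>_cont(2)]] .
  finally show ?thesis .
qed

definition cell_ratio :: "nat \<Rightarrow> real measure \<Rightarrow> real measure \<Rightarrow> nat \<Rightarrow> real" where
  "cell_ratio n P q i = measure q (grid_cell n i) / measure P (grid_cell n i)"

definition grid_reweight :: "nat \<Rightarrow> real measure \<Rightarrow> real measure \<Rightarrow> real measure" where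
  "grid_reweight n P q = density P (\<lambda>x. ennreal (cell_ratio n P q (grid_index n x)))"

context
  fixes n :: nat and P q :: "real measure"
  assumes n: "0 < n" and P: "prob01 P" and q: "prob01 q"
    and cells_pos: "\<And>i. i < n \<Longrightarrow> 0 < measure P (grid_cell n i)"
begin

lemma cell_ratio_mult_measure:
  assumes "i < n"
  shows "cell_ratio n P q i * measure P (grid_cell n i) = measure q (grid_cell n i)"
proof -
  have "measure P (grid_cell n i) \<noteq> 0"
    using cells_pos[OF assms] by simp
  then show ?thesis
    unfolding cell_ratio_def by simp
qed

lemma cell_ratio_nonneg: "0 \<le> cell_ratio n P q i"
  unfolding cell_ratio_def by simp

lemma integral_grid_reweight_step:
  fixes h :: "nat \<Rightarrow> real"
  shows "(\<integral>x. h (grid_index n x) \<partial>grid_reweight n P q) = (\<integral>x. h (grid_index n x) \<partial>q)"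
proof -
  let ?c = "cell_ratio n P q"
  have "(\<integral>x. h (grid_index n x) \<partial>grid_reweight n P q) = (\<integral>x. (\<lambda>i. ?c i * h i) (grid_index n x) \<partial>P)"
    unfolding grid_reweight_def
    by (subst integral_density) (auto simp: prob01_measurable_grid_step[OF P] cell_ratio_nonneg)
  also have "\<dots> = (\<Sum>i<n. ?c i * h i * measure P (grid_cell n i))"
    using has_bochner_integral_grid_step[OF P n] by (rule has_bochner_integral_integral_eq)
  also have "\<dots> = (\<Sum>i<n. h i * measure q (grid_cell n i))"
    using cell_ratio_mult_measure by (intro sum.cong) (auto simp: mult_ac)
  also have "\<dots> = (\<integral>x. h (grid_index n x) \<partial>q)"
    using has_bochner_integral_grid_step[OF q n] by (rule has_bochner_integral_integral_eq[symmetric])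
  finally show ?thesis .
qed

lemma prob01_grid_reweight: "prob01 (grid_reweight n P q)"
proof -
  let ?c = "cell_ratio n P q"
  note step = has_bochner_integral_grid_step[OF P n, of ?c]
  have "emeasure (grid_reweight n P q) (space P) = (\<integral>\<^sup>+x. ennreal (?c (grid_index n x)) \<partial>P)"
    unfolding grid_reweight_def using prob01_measurable_grid_step[OF P]
    by (subst emeasure_density) (auto intro!: nn_integral_cong)
  also have "\<dots> = ennreal (\<Sum>i<n. ?c i * measure P (grid_cell n i))"
    using integrable.intros[OF step] has_bochner_integral_integral_eq[OF step] cell_ratio_nonneg
    by (subst nn_integral_eq_integral) auto
  also have "(\<Sum>i<n. ?c i * measure P (grid_cell n i)) = 1"
    using cell_ratio_mult_measure sum_measure_grid_cell[OF q n] by simp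
  finally have "prob_space (grid_reweight n P q)"
    by (intro prob_spaceI) (simp add: grid_reweight_def)
  then show ?thesis
    using P unfolding prob01_def grid_reweight_def by simp
qed

lemma free_energy_grid_reweight:
  "free_energy \<kappa> P (grid_reweight n P q)
     = ereal (\<kappa> / 2 * (\<Sum>i<n. measure q (grid_cell n i) * ln (cell_ratio n P q i)))"
proof -
  interpret P: prob_space P using P by (rule prob01_prob_space)
  let ?c = "cell_ratio n P q"
  define f where "f x = enn2real (RN_deriv P (grid_reweight n P q) x)" for x
  have "AE x in P. ennreal (?c (grid_index n x)) = RN_deriv P (grid_reweight n P q) x"
    using prob01_measurable_grid_step[OF P] by (intro P.RN_deriv_unique) (auto simp: grid_reweight_def)
  then have "AE x in P. f x = ?c (grid_index n x)"
    unfolding f_def by eventually_elim (metis enn2real_ennreal cell_ratio_nonneg)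
  then have f: "AE x in P. f x * ln (f x) = (\<lambda>i. ?c i * ln (?c i)) (grid_index n x)"
    by eventually_elim simp
  have meas: "(\<lambda>x. f x * ln (f x)) \<in> borel_measurable P"
    unfolding f_def by measurable
  have ent: "has_bochner_integral P (\<lambda>x. f x * ln (f x)) (\<Sum>i<n. ?c i * ln (?c i) * measure P (grid_cell n i))"
    using has_bochner_integral_cong_AE[OF meas prob01_measurable_grid_step[OF P] f]
      has_bochner_integral_grid_step[OF P n] by (rule iffD2)
  have ac: "absolutely_continuous P (grid_reweight n P q)"
    unfolding grid_reweight_def
    using prob01_measurable_grid_step[OF P, of ?c] by (intro absolutely_continuousI_density) simp
  have "(\<Sum>i<n. ?c i * ln (?c i) * measure P (grid_cell n i)) = (\<Sum>i<n. measure q (grid_cell n i) * ln (?c i))"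
    using cell_ratio_mult_measure by (intro sum.cong) (auto simp: mult_ac)
  then show ?thesis
    using ac integrable.intros[OF ent] has_bochner_integral_integral_eq[OF ent]
    unfolding free_energy_def f_def[symmetric] by (simp add: Let_def)
qed

lemma free_energy_grid_reweight_le:
  assumes "0 \<le> \<kappa>"
  shows "free_energy \<kappa> P (grid_reweight n P q)
     \<le> ereal (\<kappa> / 2 * (\<Sum>i<n. measure q (grid_cell n i) * - ln (measure P (grid_cell n i))))"
proof -
  interpret q: prob_space q using q by (rule prob01_prob_space)
  have "measure q (grid_cell n i) * ln (cell_ratio n P q i) \<le> measure q (grid_cell n i) * - ln (measure P (grid_cell n i))"
    if "i < n" for i
  proof (cases "measure q (grid_cell n i) = 0")
    case False
    then have "0 < measure q (grid_cell n i)"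
      using measure_nonneg by (simp add: order_less_le)
    then have "ln (cell_ratio n P q i) = ln (measure q (grid_cell n i)) - ln (measure P (grid_cell n i))"
      using cells_pos[OF that] by (simp add: cell_ratio_def ln_div)
    moreover have "ln (measure q (grid_cell n i)) \<le> 0"
      using \<open>0 < measure q _\<close> by simp
    ultimately show ?thesis
      using \<open>0 < measure q _\<close> by (intro mult_left_mono) auto
  qed simp
  then show ?thesis
    using assms by (auto simp: free_energy_grid_reweight intro!: mult_left_mono sum_mono)
qed

end

section \<open>Large deviation bounds\<close>

lemma integral_exp_le_grid_size:
  fixes V :: "real \<Rightarrow> real"
  assumes P: "prob01 P" and n: "0 < n" and "0 < \<kappa>" and V: "continuous_on {0..1} V"
    and mesh: "\<forall>x\<in>{0..1}. \<forall>y\<in>{0..1}. \<bar>x - y\<bar> \<le> 1 / n \<longrightarrow> \<bar>V x - V y\<bar> < \<eta>"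
    and cells: "\<forall>i\<in>{..<n}. measure P (grid_cell n i) < exp (2 / \<kappa> * (2 * \<eta> - V (real i / n)))"
  shows "(\<integral>x. exp (2 / \<kappa> * (V x - 3 * \<eta>)) \<partial>P) \<le> n"
proof -
  define G where "G i = exp (2 / \<kappa> * (V (real i / n) - 2 * \<eta>))" for i
  note step = has_bochner_integral_grid_step[OF P n, of G]
  have "(\<integral>x. exp (2 / \<kappa> * (V x - 3 * \<eta>)) \<partial>P) \<le> (\<integral>x. G (grid_index n x) \<partial>P)"
  proof (rule integral_mono[OF prob01_integrable_continuous[OF P] integrable.intros[OF step]])
    show "continuous_on {0..1} (\<lambda>x. exp (2 / \<kappa> * (V x - 3 * \<eta>)))"
      by (intro continuous_intros V)
    fix x assume "x \<in> space P"
    then have "x \<in> {0..1}"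
      using prob01_space[OF P] by simp
    then have "V x - 3 * \<eta> \<le> V (real (grid_index n x) / n) - 2 * \<eta>"
      using mesh grid_point_close[OF n] by (smt (verit))
    then have "2 / \<kappa> * (V x - 3 * \<eta>) \<le> 2 / \<kappa> * (V (real (grid_index n x) / n) - 2 * \<eta>)"
      using \<open>0 < \<kappa>\<close> by (intro mult_left_mono) auto
    then show "exp (2 / \<kappa> * (V x - 3 * \<eta>)) \<le> G (grid_index n x)"
      unfolding G_def by simp
  qed
  also have "\<dots> = (\<Sum>i<n. G i * measure P (grid_cell n i))"
    using step by (rule has_bochner_integral_integral_eq)
  also have "\<dots> \<le> (\<Sum>i<n. G i * exp (2 / \<kappa> * (2 * \<eta> - V (real i / n))))"
    using cells by (intro sum_mono mult_left_mono) (auto simp: G_def less_imp_le)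
  also have "\<dots> = (\<Sum>i<n. 1)"
    unfolding G_def exp_add[symmetric] by (simp add: algebra_simps)
  finally show ?thesis
    by simp
qed

lemma scaled_log_less_iff:
  assumes "0 < \<kappa>" "0 \<le> p"
  shows "scaled_log \<kappa> p < ereal a \<longleftrightarrow> p < exp (2 / \<kappa> * a)"
proof (cases "p = 0")
  case False
  then have "p = exp (ln p)"
    using assms by simp
  then have "p < exp (2 / \<kappa> * a) \<longleftrightarrow> ln p < 2 / \<kappa> * a"
    by (metis exp_less_cancel_iff)
  then show ?thesis
    using False assms by (simp add: scaled_log_def field_simps)
qed (simp add: scaled_log_def)

locale ldp_setting =
  fixes V :: "real \<Rightarrow> real" and \<pi> :: "real \<Rightarrow> real measure"
  assumes V_cont: "continuous_on {0..1} V"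
    and \<pi>_prob: "\<And>\<kappa>. \<kappa> > 0 \<Longrightarrow> prob01 (\<pi> \<kappa>)"

locale ldp_upper_bound = ldp_setting +
  assumes LDP_upper: "\<And>E. E \<in> sets borel \<Longrightarrow> E \<subseteq> {0..1} \<Longrightarrow>
    Limsup (at_right 0) (\<lambda>\<kappa>. scaled_log \<kappa> (measure (\<pi> \<kappa>) E))
      \<le> - (INF x\<in>(top_of_set {0..1}) closure_of E. ereal (V x))"
begin

lemma eventually_measure_less_exp:
  assumes E: "E \<in> sets borel" "E \<subseteq> {0..1}"
    and c: "\<And>x. x \<in> top_of_set {0..1} closure_of E \<Longrightarrow> c \<le> V x" and "0 < \<eta>"
  shows "\<forall>\<^sub>F \<kappa> in at_right 0. measure (\<pi> \<kappa>) E < exp (2 / \<kappa> * (\<eta> - c))"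
proof -
  have "ereal c \<le> (INF x\<in>top_of_set {0..1} closure_of E. ereal (V x))"
    using c by (intro INF_greatest) simp
  then have "- (INF x\<in>top_of_set {0..1} closure_of E. ereal (V x)) \<le> ereal (- c)"
    by (simp add: ereal_uminus_le_reorder)
  then have "Limsup (at_right 0) (\<lambda>\<kappa>. scaled_log \<kappa> (measure (\<pi> \<kappa>) E)) \<le> ereal (- c)"
    using LDP_upper[OF E] by (rule order_trans[rotated])
  then have "Limsup (at_right 0) (\<lambda>\<kappa>. scaled_log \<kappa> (measure (\<pi> \<kappa>) E)) < ereal (\<eta> - c)"
    using \<open>0 < \<eta>\<close> by (simp add: le_less_trans)
  then have "\<forall>\<^sub>F \<kappa> in at_right 0. scaled_log \<kappa> (measure (\<pi> \<kappa>) E) < ereal (\<eta> - c)"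
    by (rule Limsup_lessD)
  with eventually_at_right_less[of 0] show ?thesis
    by eventually_elim (simp add: scaled_log_less_iff)
qed

lemma eventually_grid_cell_measure_less:
  assumes n: "0 < n" and "0 < \<eta>"
    and mesh: "\<forall>x\<in>{0..1}. \<forall>y\<in>{0..1}. \<bar>x - y\<bar> \<le> 1 / n \<longrightarrow> \<bar>V x - V y\<bar> < \<eta>"
  shows "\<forall>\<^sub>F \<kappa> in at_right 0. \<forall>i\<in>{..<n}.
    measure (\<pi> \<kappa>) (grid_cell n i) < exp (2 / \<kappa> * (2 * \<eta> - V (real i / n)))"
proof (intro eventually_ball_finite ballI)
  fix i assume "i \<in> {..<n}"
  have "\<forall>\<^sub>F \<kappa> in at_right 0. measure (\<pi> \<kappa>) (grid_cell n i) < exp (2 / \<kappa> * (\<eta> - (V (real i / n) - \<eta>)))"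
  proof (rule eventually_measure_less_exp[OF grid_cell_borel grid_cell_subset _ \<open>0 < \<eta>\<close>])
    fix x assume "x \<in> top_of_set {0..1} closure_of grid_cell n i"
    then have "x \<in> {0..1}" "x \<in> {real i / n .. (real i + 1) / n}"
      using grid_cell_closure_of[OF n] by blast+
    moreover have "real i / n \<in> {0..1}"
      using \<open>i \<in> {..<n}\<close> by simp
    ultimately show "V (real i / n) - \<eta> \<le> V x"
      using mesh abs_diff_grid_point_le by (smt (verit))
  qed
  then show "\<forall>\<^sub>F \<kappa> in at_right 0. measure (\<pi> \<kappa>) (grid_cell n i) < exp (2 / \<kappa> * (2 * \<eta> - V (real i / n)))"
    by (simp add: algebra_simps)
qed simp

lemma exp_moment_eventually_bounded:
  assumes "0 < \<delta>"
  obtains N :: nat where "\<forall>\<^sub>F \<kappa> in at_right 0. (\<integral>x. exp (2 / \<kappa> * (V x - \<delta>)) \<partial>\<pi> \<kappa>) \<le> N"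
proof -
  define \<eta> where "\<eta> = \<delta> / 3"
  have "0 < \<eta>"
    using assms by (simp add: \<eta>_def)
  have "\<forall>\<^sub>F n in sequentially. 0 < n \<and>
      (\<forall>x\<in>{0..1}. \<forall>y\<in>{0..1}. dist x y \<le> 1 / real n \<longrightarrow> dist (V x) (V y) < \<eta>)"
    using \<open>0 < \<eta>\<close> compact_uniformly_continuous[OF V_cont compact_Icc]
    by (intro eventually_conj eventually_gt_at_top uniformly_continuous_on_eventually_mesh) auto
  then obtain n :: nat where n: "0 < n"
    and mesh: "\<forall>x\<in>{0..1}. \<forall>y\<in>{0..1}. \<bar>x - y\<bar> \<le> 1 / n \<longrightarrow> \<bar>V x - V y\<bar> < \<eta>"
    unfolding eventually_sequentially dist_real_def by blast
  have "\<forall>\<^sub>F \<kappa> in at_right 0. (\<integral>x. exp (2 / \<kappa> * (V x - 3 * \<eta>)) \<partial>\<pi> \<kappa>) \<le> n"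
    using eventually_grid_cell_measure_less[OF n \<open>0 < \<eta>\<close> mesh] eventually_at_right_less[of 0]
    by eventually_elim (rule integral_exp_le_grid_size[OF \<pi>_prob n _ V_cont mesh])
  then show ?thesis
    by (intro that) (simp add: \<eta>_def)
qed

lemma Liminf_free_energy_ge:
  assumes qs: "\<forall>\<kappa>>0. prob01 (qs \<kappa>)" and q: "prob01 q" and conv: "weak_star_conv qs q"
  shows "ereal (\<integral>x. V x \<partial>q) \<le> Liminf (at_right 0) (\<lambda>\<kappa>. free_energy \<kappa> (\<pi> \<kappa>) (qs \<kappa>))"
proof (rule ereal_le_epsilon2)
  fix \<delta> :: real
  assume "0 < \<delta>"
  let ?L = "\<integral>x. V x \<partial>q" and ?F = "\<lambda>\<kappa>. free_energy \<kappa> (\<pi> \<kappa>) (qs \<kappa>)"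
  obtain N :: nat where N: "\<forall>\<^sub>F \<kappa> in at_right 0. (\<integral>x. exp (2 / \<kappa> * (V x - \<delta>)) \<partial>\<pi> \<kappa>) \<le> N"
    using exp_moment_eventually_bounded[OF \<open>0 < \<delta>\<close>] by blast
  have "((\<lambda>\<kappa>. \<integral>x. V x \<partial>qs \<kappa>) \<longlongrightarrow> ?L) (at_right 0)"
    using conv V_cont unfolding weak_star_conv_def by blast
  then have lim: "((\<lambda>\<kappa>. ereal ((\<integral>x. V x \<partial>qs \<kappa>) - \<delta> - \<kappa> / 2 * N)) \<longlongrightarrow> ereal (?L - \<delta>)) (at_right 0)"
    unfolding lim_ereal by (auto intro!: tendsto_eq_intros)
  have "\<forall>\<^sub>F \<kappa> in at_right 0. ereal ((\<integral>x. V x \<partial>qs \<kappa>) - \<delta> - \<kappa> / 2 * N) \<le> ?F \<kappa>"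
    using N eventually_at_right_less[of 0]
  proof eventually_elim
    case (elim \<kappa>)
    show ?case
      using qs elim(2) by (intro free_energy_ge_exp_moment[OF \<pi>_prob[OF elim(2)] _ V_cont elim(2) elim(1)]) auto
  qed
  then have "ereal (?L - \<delta>) \<le> Liminf (at_right 0) ?F"
    using Liminf_mono lim_imp_Liminf[OF _ lim] by fastforce
  then show "ereal ?L \<le> Liminf (at_right 0) ?F + ereal \<delta>"
    by (cases "Liminf (at_right 0) ?F") auto
qed

end

locale ldp_lower_bound = ldp_setting +
  assumes LDP_lower: "\<And>E. E \<in> sets borel \<Longrightarrow> E \<subseteq> {0..1} \<Longrightarrow>
    - (INF x\<in>(top_of_set {0..1}) interior_of E. ereal (V x))
      \<le> Liminf (at_right 0) (\<lambda>\<kappa>. scaled_log \<kappa> (measure (\<pi> \<kappa>) E))"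
begin

lemma eventually_scaled_log_greater:
  assumes E: "E \<in> sets borel" "E \<subseteq> {0..1}" and y: "y \<in> top_of_set {0..1} interior_of E" and "0 < \<eta>"
  shows "\<forall>\<^sub>F \<kappa> in at_right 0. ereal (- V y - \<eta>) < scaled_log \<kappa> (measure (\<pi> \<kappa>) E)"
proof (rule less_LiminfD)
  have "(INF x\<in>top_of_set {0..1} interior_of E. ereal (V x)) \<le> ereal (V y)"
    using y by (rule INF_lower)
  then have "ereal (- V y) \<le> - (INF x\<in>top_of_set {0..1} interior_of E. ereal (V x))"
    by (metis ereal_minus_le_minus uminus_ereal.simps(1))
  also have "\<dots> \<le> Liminf (at_right 0) (\<lambda>\<kappa>. scaled_log \<kappa> (measure (\<pi> \<kappa>) E))"
    by (rule LDP_lower[OF E])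
  finally have "ereal (- V y) \<le> Liminf (at_right 0) (\<lambda>\<kappa>. scaled_log \<kappa> (measure (\<pi> \<kappa>) E))" .
  moreover have "ereal (- V y - \<eta>) < ereal (- V y)"
    using \<open>0 < \<eta>\<close> by simp
  ultimately show "ereal (- V y - \<eta>) < Liminf (at_right 0) (\<lambda>\<kappa>. scaled_log \<kappa> (measure (\<pi> \<kappa>) E))"
    by (rule less_le_trans[rotated])
qed

lemma eventually_grid_cell_log_bound:
  assumes n: "0 < n"
  shows "\<forall>\<^sub>F \<kappa> in at_right 0. \<forall>i\<in>{..<n}. 0 < measure (\<pi> \<kappa>) (grid_cell n i) \<and>
    - (\<kappa> / 2 * ln (measure (\<pi> \<kappa>) (grid_cell n i))) < (INF y\<in>{real i / n <..< (real i + 1) / n}. V y) + 1 / n"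
proof (intro eventually_ball_finite ballI)
  fix i assume i: "i \<in> {..<n}"
  let ?s = "INF y\<in>{real i / n <..< (real i + 1) / n}. V y"
  obtain y where y: "y \<in> {real i / n <..< (real i + 1) / n}" and y_near: "V y < ?s + 1 / (2 * n)"
    using grid_cell_INF_approx[OF V_cont, of i n "1 / (2 * n)"] i n by auto
  have "y \<in> top_of_set {0..1} interior_of grid_cell n i"
    using grid_cell_interior_of i y by blast
  then have "\<forall>\<^sub>F \<kappa> in at_right 0. ereal (- V y - 1 / (2 * n)) < scaled_log \<kappa> (measure (\<pi> \<kappa>) (grid_cell n i))"
    using n by (intro eventually_scaled_log_greater[OF grid_cell_borel grid_cell_subset]) auto
  then show "\<forall>\<^sub>F \<kappa> in at_right 0. 0 < measure (\<pi> \<kappa>) (grid_cell n i) \<and>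
      - (\<kappa> / 2 * ln (measure (\<pi> \<kappa>) (grid_cell n i))) < ?s + 1 / n"
  proof eventually_elim
    case (elim \<kappa>)
    then have "measure (\<pi> \<kappa>) (grid_cell n i) \<noteq> 0"
      and "- V y - 1 / (2 * n) < \<kappa> / 2 * ln (measure (\<pi> \<kappa>) (grid_cell n i))"
      by (auto simp: scaled_log_def split: if_splits)
    moreover have "1 / (2 * real n) + 1 / (2 * real n) = 1 / n"
      by simp
    ultimately show ?case
      using y_near by (simp add: order_less_le)
  qed
qed simp

lemma eventually_grid_cost_le:
  assumes q: "prob01 q" and n: "0 < n"
  shows "\<forall>\<^sub>F \<kappa> in at_right 0. (\<forall>i<n. 0 < measure (\<pi> \<kappa>) (grid_cell n i)) \<and>
    \<kappa> / 2 * (\<Sum>i<n. measure q (grid_cell n i) * - ln (measure (\<pi> \<kappa>) (grid_cell n i)))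
      \<le> (\<integral>x. V x \<partial>q) + 1 / n"
  using eventually_grid_cell_log_bound[OF n]
proof eventually_elim
  case (elim \<kappa>)
  define s where "s i = (INF y\<in>{real i / n <..< (real i + 1) / n}. V y)" for i
  have "\<kappa> / 2 * (\<Sum>i<n. measure q (grid_cell n i) * - ln (measure (\<pi> \<kappa>) (grid_cell n i)))
      = (\<Sum>i<n. measure q (grid_cell n i) * - (\<kappa> / 2 * ln (measure (\<pi> \<kappa>) (grid_cell n i))))"
    by (simp add: sum_distrib_left mult_ac)
  also have "\<dots> \<le> (\<Sum>i<n. measure q (grid_cell n i) * (s i + 1 / n))"
    using elim unfolding s_def by (intro sum_mono mult_left_mono) (auto simp: less_imp_le)
  also have "\<dots> = (\<Sum>i<n. s i * measure q (grid_cell n i)) + (\<Sum>i<n. measure q (grid_cell n i)) / n"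
    by (simp add: algebra_simps sum.distrib sum_divide_distrib)
  also have "\<dots> = (\<Sum>i<n. s i * measure q (grid_cell n i)) + 1 / n"
    using sum_measure_grid_cell[OF q n] by simp
  also have "\<dots> \<le> (\<integral>x. V x \<partial>q) + 1 / n"
    using grid_cell_INF_le[OF V_cont] prob01_integrable_continuous[OF q V_cont]
    by (simp add: s_def sum_grid_step_le_integral[OF q n])
  finally show ?case
    using elim by blast
qed

lemma eventually_grid_reweight_recovers:
  assumes q: "prob01 q" and n: "0 < n"
  shows "\<forall>\<^sub>F \<kappa> in at_right 0. prob01 (grid_reweight n (\<pi> \<kappa>) q) \<and>
    (\<forall>h :: nat \<Rightarrow> real. (\<integral>x. h (grid_index n x) \<partial>grid_reweight n (\<pi> \<kappa>) q) = (\<integral>x. h (grid_index n x) \<partial>q)) \<and>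
    free_energy \<kappa> (\<pi> \<kappa>) (grid_reweight n (\<pi> \<kappa>) q) \<le> ereal ((\<integral>x. V x \<partial>q) + 1 / n)"
  using eventually_grid_cost_le[OF q n] eventually_at_right_less[of 0]
proof eventually_elim
  case (elim \<kappa>)
  then have P: "prob01 (\<pi> \<kappa>)" and pos: "\<And>i. i < n \<Longrightarrow> 0 < measure (\<pi> \<kappa>) (grid_cell n i)"
    using \<pi>_prob by auto
  have "free_energy \<kappa> (\<pi> \<kappa>) (grid_reweight n (\<pi> \<kappa>) q)
      \<le> ereal (\<kappa> / 2 * (\<Sum>i<n. measure q (grid_cell n i) * - ln (measure (\<pi> \<kappa>) (grid_cell n i))))"
    by (rule free_energy_grid_reweight_le[OF n P q pos less_imp_le[OF elim(2)]])
  also have "\<dots> \<le> ereal ((\<integral>x. V x \<partial>q) + 1 / n)"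
    using elim by simp
  finally show ?case
    using prob01_grid_reweight[OF n P q pos] integral_grid_reweight_step[OF n P q pos] by blast
qed

lemma recovery_sequence:
  assumes q: "prob01 q"
  obtains qs where "\<forall>\<kappa>>0. prob01 (qs \<kappa>)" "weak_star_conv qs q"
    "Limsup (at_right 0) (\<lambda>\<kappa>. free_energy \<kappa> (\<pi> \<kappa>) (qs \<kappa>)) \<le> ereal (\<integral>x. V x \<partial>q)"
proof -
  let ?L = "\<integral>x. V x \<partial>q"
  define good where "good n \<kappa> \<longleftrightarrow> 0 < n \<and> prob01 (grid_reweight n (\<pi> \<kappa>) q) \<and>
    (\<forall>h :: nat \<Rightarrow> real. (\<integral>x. h (grid_index n x) \<partial>grid_reweight n (\<pi> \<kappa>) q) = (\<integral>x. h (grid_index n x) \<partial>q)) \<and>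
    free_energy \<kappa> (\<pi> \<kappa>) (grid_reweight n (\<pi> \<kappa>) q) \<le> ereal (?L + 1 / n)" for n \<kappa>
  have "\<forall>\<^sub>F \<kappa> in at_right 0. 0 < n \<longrightarrow> good n \<kappa>" for n
    using eventually_grid_reweight_recovers[OF q, of n] unfolding good_def
    by (cases "0 < n") (auto elim: eventually_mono)
  then obtain N where N: "filterlim N at_top (at_right 0)"
    and N_good: "\<forall>\<^sub>F \<kappa> in at_right 0. 0 < N \<kappa> \<longrightarrow> good (N \<kappa>) \<kappa>"
    by (rule eventually_at_right_diagonal)
  have "\<forall>\<^sub>F \<kappa> in at_right 0. 1 \<le> N \<kappa>"
    using N unfolding filterlim_at_top by blast
  with N_good have good: "\<forall>\<^sub>F \<kappa> in at_right 0. good (N \<kappa>) \<kappa>"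
    by eventually_elim simp
  define qs where "qs \<kappa> = (if good (N \<kappa>) \<kappa> then grid_reweight (N \<kappa>) (\<pi> \<kappa>) q else q)" for \<kappa>
  show ?thesis
  proof
    show "\<forall>\<kappa>>0. prob01 (qs \<kappa>)"
      using q by (simp add: qs_def good_def)
    have "\<forall>\<^sub>F \<kappa> in at_right 0. prob01 (qs \<kappa>) \<and>
        (\<forall>h :: nat \<Rightarrow> real. (\<integral>x. h (grid_index (N \<kappa>) x) \<partial>qs \<kappa>) = (\<integral>x. h (grid_index (N \<kappa>) x) \<partial>q))"
      using good by eventually_elim (simp add: qs_def good_def)
    then show "weak_star_conv qs q"
      by (rule weak_star_conv_grid_agree[OF N q])
    have "((\<lambda>\<kappa>. 1 / real (N \<kappa>)) \<longlongrightarrow> 0) (at_right 0)"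
      using tendsto_inverse_0_at_top[OF filterlim_compose[OF filterlim_real_sequentially N]]
      by (simp add: inverse_eq_divide)
    then have lim: "((\<lambda>\<kappa>. ereal (?L + 1 / N \<kappa>)) \<longlongrightarrow> ereal ?L) (at_right 0)"
      using tendsto_add[OF tendsto_const, of _ 0 _ ?L] by simp
    have "\<forall>\<^sub>F \<kappa> in at_right 0. free_energy \<kappa> (\<pi> \<kappa>) (qs \<kappa>) \<le> ereal (?L + 1 / N \<kappa>)"
      using good by eventually_elim (simp add: qs_def good_def)
    then have "Limsup (at_right 0) (\<lambda>\<kappa>. free_energy \<kappa> (\<pi> \<kappa>) (qs \<kappa>))
        \<le> Limsup (at_right 0) (\<lambda>\<kappa>. ereal (?L + 1 / N \<kappa>))"
      by (rule Limsup_mono)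
    also have "\<dots> = ereal ?L"
      using trivial_limit_at_right_real lim by (rule lim_imp_Limsup)
    finally show "Limsup (at_right 0) (\<lambda>\<kappa>. free_energy \<kappa> (\<pi> \<kappa>) (qs \<kappa>)) \<le> ereal ?L" .
  qed
qed

end

locale ldp = ldp_upper_bound + ldp_lower_bound
begin

lemma INF_V_eq_0: "(INF x\<in>{0..1}. V x) = 0"
proof -
  have "\<forall>\<^sub>F \<kappa> in at_right 0. scaled_log \<kappa> (measure (\<pi> \<kappa>) {0..1}) = 0"
    using eventually_at_right_less[of 0]
  proof eventually_elim
    case (elim \<kappa>)
    then have P: "prob01 (\<pi> \<kappa>)"
      by (rule \<pi>_prob)
    then have "measure (\<pi> \<kappa>) {0..1} = 1"
      using prob_space.prob_space[OF prob01_prob_space[OF P]] prob01_space[OF P] by simp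
    then show ?case
      by (simp add: scaled_log_def)
  qed
  then have "((\<lambda>\<kappa>. scaled_log \<kappa> (measure (\<pi> \<kappa>) {0..1})) \<longlongrightarrow> 0) (at_right 0)"
    by (rule tendsto_eventually)
  then have Liminf: "Liminf (at_right 0) (\<lambda>\<kappa>. scaled_log \<kappa> (measure (\<pi> \<kappa>) {0..1})) = 0"
    and Limsup: "Limsup (at_right 0) (\<lambda>\<kappa>. scaled_log \<kappa> (measure (\<pi> \<kappa>) {0..1})) = 0"
    by (simp_all add: lim_imp_Liminf lim_imp_Limsup)
  have "top_of_set {0..1} interior_of {0..1::real} = {0..1}" "top_of_set {0..1} closure_of {0..1::real} = {0..1}"
    using interior_of_topspace[of "top_of_set {0..1::real}"] closure_of_topspace[of "top_of_set {0..1::real}"]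
    by simp_all
  then have "- (INF x\<in>{0..1}. ereal (V x)) \<le> 0" "0 \<le> - (INF x\<in>{0..1}. ereal (V x))"
    using LDP_lower[of "{0..1}"] LDP_upper[of "{0..1}"] Liminf Limsup by simp_all
  then have "(INF x\<in>{0..1}. ereal (V x)) = 0"
    by (metis antisym ereal_uminus_le_0_iff ereal_0_le_uminus_iff)
  then show ?thesis
    using ereal_INF[of V "{0..1}"] by (simp add: zero_ereal_def)
qed

lemma pot_energy_eq_integral: "prob01 q \<Longrightarrow> pot_energy V q = (\<integral>x. V x \<partial>q)"
  unfolding pot_energy_def INF_V_eq_0 by simp

end

theorem proposition3:
  fixes V :: "real \<Rightarrow> real" and \<pi> :: "real \<Rightarrow> real measure"
  assumes V_cont: "continuous_on {0..1} V"
    and \<pi>_prob: "\<And>\<kappa>. \<kappa> > 0 \<Longrightarrow> prob01 (\<pi> \<kappa>)"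
    and \<pi>_ac: "\<And>\<kappa>. \<kappa> > 0 \<Longrightarrow> absolutely_continuous (restrict_space lborel {0..1}) (\<pi> \<kappa>)"
    and LDP_lower: "\<And>E. E \<in> sets borel \<Longrightarrow> E \<subseteq> {0..1} \<Longrightarrow>
        - (INF x\<in>(top_of_set {0..1}) interior_of E. ereal (V x))
          \<le> Liminf (at_right 0) (\<lambda>\<kappa>. scaled_log \<kappa> (measure (\<pi> \<kappa>) E))"
    and LDP_upper: "\<And>E. E \<in> sets borel \<Longrightarrow> E \<subseteq> {0..1} \<Longrightarrow>
        Limsup (at_right 0) (\<lambda>\<kappa>. scaled_log \<kappa> (measure (\<pi> \<kappa>) E))
          \<le> - (INF x\<in>(top_of_set {0..1}) closure_of E. ereal (V x))"
  shows "(\<forall>qs q. (\<forall>\<kappa>>0. prob01 (qs \<kappa>)) \<and> prob01 q \<and> weak_star_conv qs q \<longrightarrow>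
            ereal (pot_energy V q) \<le> Liminf (at_right 0) (\<lambda>\<kappa>. free_energy \<kappa> (\<pi> \<kappa>) (qs \<kappa>)))
       \<and> (\<forall>q. prob01 q \<longrightarrow>
            (\<exists>qs. (\<forall>\<kappa>>0. prob01 (qs \<kappa>)) \<and> weak_star_conv qs q \<and>
               Limsup (at_right 0) (\<lambda>\<kappa>. free_energy \<kappa> (\<pi> \<kappa>) (qs \<kappa>)) \<le> ereal (pot_energy V q)))"
proof -
  interpret ldp V \<pi>
    using V_cont \<pi>_prob LDP_upper LDP_lower by unfold_locales auto
  show ?thesis
  proof (intro conjI allI impI)
    fix qs q
    assume "(\<forall>\<kappa>>0. prob01 (qs \<kappa>)) \<and> prob01 q \<and> weak_star_conv qs q"
    then show "ereal (pot_energy V q) \<le> Liminf (at_right 0) (\<lambda>\<kappa>. free_energy \<kappa> (\<pi> \<kappa>) (qs \<kappa>))"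
      using Liminf_free_energy_ge pot_energy_eq_integral by simp
  next
    fix q
    assume "prob01 q"
    then obtain qs where "\<forall>\<kappa>>0. prob01 (qs \<kappa>)" "weak_star_conv qs q"
      "Limsup (at_right 0) (\<lambda>\<kappa>. free_energy \<kappa> (\<pi> \<kappa>) (qs \<kappa>)) \<le> ereal (\<integral>x. V x \<partial>q)"
      by (rule recovery_sequence)
    then show "\<exists>qs. (\<forall>\<kappa>>0. prob01 (qs \<kappa>)) \<and> weak_star_conv qs q \<and>
        Limsup (at_right 0) (\<lambda>\<kappa>. free_energy \<kappa> (\<pi> \<kappa>) (qs \<kappa>)) \<le> ereal (pot_energy V q)"
      using pot_energy_eq_integral[OF \<open>prob01 q\<close>] by auto
  qed
qed

end
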